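(* Let $f\in B(\mathbb T)$, $1\le p<\infty$, and $n\in\mathbb N$. Then $$\|f-\mathcal V_nf\|_{L_p(\mathbb T)}\le C_p\,\widetilde E(f,\mathcal T_n)_{L_p(\mathbb T)},$$ where $C_p$ depends only on $p$.
   Context: $B(\mathbb T)$: real-valued bounded measurable $2\pi$-periodic functions; $\|g\|_{L_p(\mathbb T)}=(\int_0^{2\pi}|g|^p)^{1/p}$. $\mathcal T_n$: real univariate trigonometric polynomials of order at most $n$. $\widetilde E(f,\mathcal T_n)_{L_p(\mathbb T)}=\inf\{\|Q-q\|_{L_p(\mathbb T)}:q,Q\in\mathcal T_n,\ q\le f\le Q\text{ everywhere}\}$. De la Vallée-Poussin interpolation means: $\mathcal V_nf(\phi)=\frac1{3n}\sum_{k=0}^{6n-1}f(t_k)K_n(\phi-t_k)$, $t_k=\frac{\pi k}{3n}$, where $K_n(\phi)=\frac12+\sum_{k=1}^{2n}\cos k\phi+\sum_{k=2n+1}^{4n-1}\frac{4n-k}{2n}\cos k\phi$. *)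

theory Defs
  imports "HOL-Analysis.Analysis"
begin

definition B_T :: "(real \<Rightarrow> real) set" where
  "B_T = {f. f \<in> borel_measurable lborel \<and> bounded (range f) \<and> (\<forall>x. f (x + 2*pi) = f x)}"

definition Lp_norm :: "real \<Rightarrow> (real \<Rightarrow> real) \<Rightarrow> real" where
  "Lp_norm p g = (LINT x:{0..2*pi}|lborel. \<bar>g x\<bar> powr p) powr (1/p)"

definition trig_polys :: "nat \<Rightarrow> (real \<Rightarrow> real) set" where
  "trig_polys n = {q. \<exists>a b :: nat \<Rightarrow> real.
      q = (\<lambda>x. a 0 + (\<Sum>k=1..n. a k * cos (real k * x) + b k * sin (real k * x)))}"

definition one_sided_E :: "real \<Rightarrow> (real \<Rightarrow> real) \<Rightarrow> nat \<Rightarrow> real" where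
  "one_sided_E p f n = Inf {Lp_norm p (\<lambda>x. Q x - q x) | q Q.
      q \<in> trig_polys n \<and> Q \<in> trig_polys n \<and> (\<forall>x. q x \<le> f x \<and> f x \<le> Q x)}"

definition VP_kernel :: "nat \<Rightarrow> real \<Rightarrow> real" where
  "VP_kernel n \<phi> = 1/2 + (\<Sum>k=1..2*n. cos (real k * \<phi>))
     + (\<Sum>k=2*n+1..4*n-1. (real (4*n) - real k) / real (2*n) * cos (real k * \<phi>))"

definition VP_means :: "nat \<Rightarrow> (real \<Rightarrow> real) \<Rightarrow> real \<Rightarrow> real" where
  "VP_means n f \<phi> = 1 / (3 * real n) *
     (\<Sum>k=0..6*n-1. f (pi * real k / (3 * real n)) * VP_kernel n (\<phi> - pi * real k / (3 * real n)))"

end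

theory Submission
  imports Defs
begin

text \<open>
  The \<open>6n\<close>-point equispaced quadrature is exact for trigonometric polynomials of degree \<open>< 6n\<close>,
  and \<open>\<integral> q(t) K\<^sub>n(\<phi> - t) dt = \<pi> q(\<phi>)\<close> for degree \<open>\<le> 2n\<close>; hence \<open>V\<^sub>n\<close> reproduces the
  polynomials \<open>q \<le> f \<le> Q\<close> of degree \<open>n\<close>, and \<open>f - V\<^sub>n f = g - V\<^sub>n g\<close> with \<open>0 \<le> g = f - q \<le> T = Q - q\<close>.
  Writing \<open>K\<^sub>n = 2 F\<^sub>4\<^sub>n - F\<^sub>2\<^sub>n\<close> with nonnegative Fejer kernels gives the polynomial majorant
  \<open>G\<^sub>n = 2 F\<^sub>4\<^sub>n + F\<^sub>2\<^sub>n\<close> of \<open>\<bar>K\<^sub>n\<bar>\<close>, so \<open>\<bar>f - V\<^sub>n f\<bar> \<le> T + S\<close> where \<open>S\<close> is \<open>V\<^sub>n T\<close> with \<open>G\<^sub>n\<close>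
  in place of \<open>K\<^sub>n\<close>. Jensen's inequality and \<open>\<integral> G\<^sub>n = 3\<pi>\<close> bound \<open>\<integral> S\<^sup>p\<close> by a multiple of
  \<open>n\<^sup>-\<^sup>1 \<Sum>\<^sub>k T(t\<^sub>k)\<^sup>p\<close>. That sum is in turn bounded by \<open>\<integral> T\<^sup>p\<close>: reproduction gives
  \<open>T(t\<^sub>k) \<le> \<pi>\<^sup>-\<^sup>1 \<integral> T(y) G\<^sub>n(t\<^sub>k - y) dy\<close>, and \<open>\<Sum>\<^sub>k G\<^sub>n(t\<^sub>k - y) = 9n\<close> by exact quadrature.
\<close>

section \<open>Jensen's inequality for powers\<close>

lemma powr_tangent_le:
  fixes x a p :: real
  assumes "0 \<le> x" "0 \<le> a" "1 \<le> p"
  shows "p * a powr (p - 1) * x - (p - 1) * a powr p \<le> x powr p"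
proof (cases "a = 0 \<or> p = 1")
  case True
  then show ?thesis using assms by auto
next
  case False
  define q where "q = p / (p - 1)"
  have p1: "p > 1" using assms False by simp
  have q1: "q > 1" and pq: "1/p + 1/q = 1" using p1 by (simp_all add: q_def field_simps)
  have "x * a powr (p - 1) \<le> x powr p / p + (a powr (p - 1)) powr q / q"
    by (rule Youngs_inequality[OF p1 q1 pq assms(1)]) simp
  also have "(a powr (p - 1)) powr q = a powr p"
    using p1 by (simp add: powr_powr q_def)
  finally have "p * (x * a powr (p - 1)) \<le> p * (x powr p / p + a powr p / q)"
    using p1 by (simp add: mult_left_mono)
  also have "\<dots> = x powr p + (p - 1) * a powr p" using p1 by (simp add: q_def field_simps)
  finally show ?thesis by (simp add: algebra_simps)
qed

lemma powr_minus_one_mult_self: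
  fixes a p :: real
  assumes "0 \<le> a" "1 \<le> p"
  shows "a powr (p - 1) * a = a powr p"
proof (cases "a = 0")
  case True
  then show ?thesis using assms by simp
next
  case False
  then show ?thesis using powr_add[of a "p - 1" 1] assms by simp
qed

text \<open>Jensen's inequality, via the tangent line at the \<open>w\<close>-average of \<open>x\<close>; the library's \<open>powr_convex\<close>
  only covers \<open>{0<..}\<close>, while \<open>x\<close> may vanish here.\<close>
lemma powr_weighted_integral_le:
  fixes w x :: "'a \<Rightarrow> real"
  assumes iw: "integrable M w" and iwx: "integrable M (\<lambda>t. w t * x t)"
    and iwxp: "integrable M (\<lambda>t. w t * x t powr p)"
    and nonneg: "\<And>t. t \<in> space M \<Longrightarrow> 0 \<le> w t \<and> 0 \<le> x t"
    and W: "integral\<^sup>L M w = W" "0 < W" and p: "1 \<le> p"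
  shows "(\<integral>t. w t * x t \<partial>M) powr p \<le> W powr (p - 1) * (\<integral>t. w t * x t powr p \<partial>M)"
proof -
  define a where "a = (\<integral>t. w t * x t \<partial>M) / W"
  have "0 \<le> (\<integral>t. w t * x t \<partial>M)"
    using nonneg by (intro integral_nonneg_AE AE_I2) (auto simp: mult_nonneg_nonneg)
  then have a0: "0 \<le> a" using W by (simp add: a_def)
  have avg: "(\<integral>t. w t * x t \<partial>M) = a * W" using W by (simp add: a_def)
  have "(\<integral>t. p * a powr (p - 1) * (w t * x t) - (p - 1) * a powr p * w t \<partial>M)
      \<le> (\<integral>t. w t * x t powr p \<partial>M)"
  proof (rule integral_mono)
    show "integrable M (\<lambda>t. p * a powr (p - 1) * (w t * x t) - (p - 1) * a powr p * w t)"
      using iwx iw by simp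
    fix t assume "t \<in> space M"
    with nonneg have "w t * (p * a powr (p - 1) * x t - (p - 1) * a powr p) \<le> w t * x t powr p"
      by (intro mult_left_mono powr_tangent_le a0 p) auto
    then show "p * a powr (p - 1) * (w t * x t) - (p - 1) * a powr p * w t \<le> w t * x t powr p"
      by (simp add: algebra_simps)
  qed (use iwxp in simp)
  also have "(\<integral>t. p * a powr (p - 1) * (w t * x t) - (p - 1) * a powr p * w t \<partial>M)
      = p * a powr (p - 1) * (a * W) - (p - 1) * a powr p * W"
    using iwx iw W by (simp add: avg)
  also have "\<dots> = a powr p * W"
    using powr_minus_one_mult_self[OF a0 p] by (simp add: algebra_simps)
  finally have "a powr p * W \<le> (\<integral>t. w t * x t powr p \<partial>M)" .
  moreover have "(\<integral>t. w t * x t \<partial>M) powr p = W powr (p - 1) * (a powr p * W)"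
    using W a0 p powr_minus_one_mult_self[of W p] by (simp add: avg powr_mult)
  ultimately show ?thesis using W by (simp add: mult_left_mono)
qed

lemma powr_weighted_set_integral_le:
  fixes w x :: "'a \<Rightarrow> real"
  assumes S: "S \<in> sets M" and "set_integrable M S w" "set_integrable M S (\<lambda>t. w t * x t)"
    "set_integrable M S (\<lambda>t. w t * x t powr p)" "\<And>t. t \<in> S \<Longrightarrow> 0 \<le> w t \<and> 0 \<le> x t"
    "(LINT t:S|M. w t) = W" "0 < W" "1 \<le> p"
  shows "(LINT t:S|M. w t * x t) powr p \<le> W powr (p - 1) * (LINT t:S|M. w t * x t powr p)"
proof -
  have S': "S \<inter> space M \<in> sets M" using S by simp
  show ?thesis
    using powr_weighted_integral_le[of "restrict_space M S" w x p W] assms S'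
    by (simp add: set_integrable_eq[OF S'] integral_restrict_space[OF S'] set_lebesgue_integral_def
        space_restrict_space)
qed

lemma powr_weighted_sum_le:
  fixes w x :: "'i \<Rightarrow> real"
  assumes "finite A" "\<And>i. i \<in> A \<Longrightarrow> 0 \<le> w i \<and> 0 \<le> x i" "(\<Sum>i\<in>A. w i) = W" "0 < W" "1 \<le> p"
  shows "(\<Sum>i\<in>A. w i * x i) powr p \<le> W powr (p - 1) * (\<Sum>i\<in>A. w i * x i powr p)"
  using powr_weighted_integral_le[of "count_space A" w x p W] assms
  by (simp add: integrable_count_space lebesgue_integral_count_space_finite)

lemma powr_add_le:
  fixes x y p :: real
  shows "0 \<le> x \<Longrightarrow> 0 \<le> y \<Longrightarrow> 1 \<le> p \<Longrightarrow> (x + y) powr p \<le> 2 powr (p - 1) * (x powr p + y powr p)"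
  using powr_weighted_sum_le[of "{0::nat, 1}" "\<lambda>_. 1" "\<lambda>i. if i = 0 then x else y" 2 p] by simp

section \<open>Trigonometric polynomials in amplitude-phase form\<close>

text \<open>Degree strictly below \<open>N\<close>, so that \<open>trig_polys n \<subseteq> cos_sums (n + 1)\<close>; unlike \<open>trig_polys\<close>,
  this form is closed under products with the obvious induction.\<close>
inductive_set cos_sums :: "nat \<Rightarrow> (real \<Rightarrow> real) set" for N :: nat where
  zero: "(\<lambda>_. 0) \<in> cos_sums N"
| add_cos: "f \<in> cos_sums N \<Longrightarrow> j < N \<Longrightarrow> (\<lambda>t. f t + c * cos (real j * t + b)) \<in> cos_sums N"

lemma cos_sums_cos: "j < N \<Longrightarrow> (\<lambda>t. c * cos (real j * t + b)) \<in> cos_sums N"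
  using cos_sums.add_cos[OF cos_sums.zero, of j N c b] by simp

lemma cos_sums_const: "0 < N \<Longrightarrow> (\<lambda>_. c) \<in> cos_sums N"
  using cos_sums_cos[of 0 N c 0] by simp

lemma cos_sums_add:
  assumes "f \<in> cos_sums N" "g \<in> cos_sums N"
  shows "(\<lambda>t. f t + g t) \<in> cos_sums N"
  using assms(2)
proof (induction g rule: cos_sums.induct)
  case zero
  then show ?case using assms(1) by simp
next
  case (add_cos g j c b)
  then show ?case
    using cos_sums.add_cos[of "\<lambda>t. f t + g t" N j c b] by (simp add: add.assoc)
qed

lemma cos_sums_cmult: "f \<in> cos_sums N \<Longrightarrow> (\<lambda>t. a * f t) \<in> cos_sums N"
proof (induction f rule: cos_sums.induct)
  case zero
  then show ?case by (simp add: cos_sums.zero)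
next
  case (add_cos f j c b)
  then show ?case
    using cos_sums.add_cos[of "\<lambda>t. a * f t" N j "a * c" b] by (simp add: algebra_simps)
qed

lemma cos_sums_diff: "f \<in> cos_sums N \<Longrightarrow> g \<in> cos_sums N \<Longrightarrow> (\<lambda>t. f t - g t) \<in> cos_sums N"
  using cos_sums_add[of f N "\<lambda>t. (-1) * g t"] cos_sums_cmult[of g N "-1"] by simp

lemma cos_sums_sum:
  "finite A \<Longrightarrow> (\<And>i. i \<in> A \<Longrightarrow> F i \<in> cos_sums N) \<Longrightarrow> (\<lambda>t. \<Sum>i\<in>A. F i t) \<in> cos_sums N"
  by (induction A rule: finite_induct) (auto intro: cos_sums.zero cos_sums_add)

lemma cos_sums_mono: "f \<in> cos_sums N \<Longrightarrow> N \<le> M \<Longrightarrow> f \<in> cos_sums M"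
  by (induction f rule: cos_sums.induct) (auto intro: cos_sums.intros)

lemma continuous_on_cos_sums: "f \<in> cos_sums N \<Longrightarrow> continuous_on A f"
  by (induction f rule: cos_sums.induct) (auto intro!: continuous_intros)

lemma cos_mult_cos_in_cos_sums:
  assumes "j < N" "k < M"
  shows "(\<lambda>t. (c * cos (real j * t + b)) * (d * cos (real k * t + e))) \<in> cos_sums (N + M)"
proof -
  have product: "cos x * cos y = (cos (x + y) + cos (x - y)) / 2" for x y :: real
    by (simp add: cos_add cos_diff)
  have sum_freq: "(\<lambda>t. (c * d / 2) * cos (real (j + k) * t + (b + e))) \<in> cos_sums (N + M)"
    by (rule cos_sums_cos) (use assms in auto)
  have diff_freq: "(\<lambda>t. (c * d / 2) * cos ((real j * t + b) - (real k * t + e))) \<in> cos_sums (N + M)"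
  proof (cases "k \<le> j")
    case True
    then have "(\<lambda>t. (c * d / 2) * cos ((real j * t + b) - (real k * t + e)))
        = (\<lambda>t. (c * d / 2) * cos (real (j - k) * t + (b - e)))"
      by (simp add: of_nat_diff algebra_simps)
    then show ?thesis using cos_sums_cos[of "j - k" "N + M" "c * d / 2" "b - e"] assms by simp
  next
    case False
    then have "(\<lambda>t. (c * d / 2) * cos ((real j * t + b) - (real k * t + e)))
        = (\<lambda>t. (c * d / 2) * cos (real (k - j) * t + (e - b)))"
      by (subst cos_minus[symmetric]) (simp add: of_nat_diff algebra_simps)
    then show ?thesis using cos_sums_cos[of "k - j" "N + M" "c * d / 2" "e - b"] assms by simp
  qed
  show ?thesis
    using cos_sums_add[OF sum_freq diff_freq] by (simp add: product algebra_simps add_divide_distrib)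
qed

lemma cos_mult_in_cos_sums:
  "g \<in> cos_sums M \<Longrightarrow> j < N \<Longrightarrow> (\<lambda>t. (c * cos (real j * t + b)) * g t) \<in> cos_sums (N + M)"
proof (induction g rule: cos_sums.induct)
  case zero
  then show ?case by (simp add: cos_sums.zero)
next
  case (add_cos g k d e)
  then show ?case
    using cos_sums_add[OF add_cos.IH[OF add_cos.prems] cos_mult_cos_in_cos_sums[OF add_cos.prems add_cos.hyps(2)]]
    by (simp add: distrib_left)
qed

lemma cos_sums_mult: "f \<in> cos_sums N \<Longrightarrow> g \<in> cos_sums M \<Longrightarrow> (\<lambda>t. f t * g t) \<in> cos_sums (N + M)"
proof (induction f rule: cos_sums.induct)
  case zero
  then show ?case by (simp add: cos_sums.zero)
next
  case (add_cos f j c b)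
  then show ?case
    using cos_sums_add[OF add_cos.IH[OF add_cos.prems] cos_mult_in_cos_sums[OF add_cos.prems add_cos.hyps(2)]]
    by (simp add: distrib_right)
qed

lemma trig_polys_subset_cos_sums: "trig_polys n \<subseteq> cos_sums (n + 1)"
proof
  fix q assume "q \<in> trig_polys n"
  then obtain a b where q: "q = (\<lambda>x. a 0 + (\<Sum>k=1..n. a k * cos (real k * x) + b k * sin (real k * x)))"
    unfolding trig_polys_def by blast
  have sin_cos: "sin (real k * x) = cos (real k * x + (-pi/2))" for k x
    by (simp add: cos_diff)
  have "(\<lambda>x. a 0 + (\<Sum>k\<in>{1..n}. a k * cos (real k * x + 0) + b k * cos (real k * x + (-pi/2))))
      \<in> cos_sums (n + 1)"
    by (intro cos_sums_add cos_sums_const cos_sums_sum cos_sums_cos) auto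
  then show "q \<in> cos_sums (n + 1)" unfolding q sin_cos by simp
qed

lemma const_in_trig_polys: "(\<lambda>_. c) \<in> trig_polys n"
  unfolding trig_polys_def
  by (intro CollectI exI[of _ "\<lambda>k. if k = 0 then c else 0"] exI[of _ "\<lambda>_. 0"]) auto

section \<open>Integrals and exact quadrature over a period\<close>

lemma set_integral_sum:
  fixes F :: "'i \<Rightarrow> 'a \<Rightarrow> real"
  assumes "\<And>i. i \<in> I \<Longrightarrow> set_integrable M S (F i)"
  shows "(LINT t:S|M. \<Sum>i\<in>I. F i t) = (\<Sum>i\<in>I. LINT t:S|M. F i t)"
  using assms unfolding set_lebesgue_integral_def set_integrable_def
  by (simp add: sum_distrib_left integral_sum)

abbreviation period_integral :: "(real \<Rightarrow> real) \<Rightarrow> real" where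
  "period_integral h \<equiv> LINT t:{0..2*pi}|lborel. h t"

lemma set_integrable_period_continuous:
  "continuous_on {0..2*pi} f \<Longrightarrow> set_integrable lborel {0..2*pi} (f :: real \<Rightarrow> real)"
  using borel_integrable_atLeastAtMost'[of 0 "2*pi" f] by simp

lemma set_integrable_period_dominated:
  assumes "h \<in> borel_measurable borel" "continuous_on {0..2*pi} u"
    "\<And>x. x \<in> {0..2*pi} \<Longrightarrow> \<bar>h x\<bar> \<le> u x"
  shows "set_integrable lborel {0..2*pi} (h :: real \<Rightarrow> real)"
proof (rule set_integrable_bound[OF set_integrable_period_continuous[OF assms(2)]])
  show "set_borel_measurable lborel {0..2*pi} h"
    unfolding set_borel_measurable_def using assms(1) by measurable
  show "AE x in lborel. x \<in> {0..2*pi} \<longrightarrow> norm (h x) \<le> norm (u x)"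
    using assms(3) by (intro AE_I2) force
qed

lemma period_integral_nonneg: "(\<And>x. 0 \<le> h x) \<Longrightarrow> 0 \<le> period_integral h"
  unfolding set_lebesgue_integral_def
  by (rule Bochner_Integration.integral_nonneg) (simp add: indicator_def)

lemma period_integral_cos:
  fixes a :: int
  shows "period_integral (\<lambda>t. cos (of_int a * t + b)) = (if a = 0 then 2*pi * cos b else 0)"
proof (cases "a = 0")
  case True
  have "period_integral (\<lambda>t. cos b) = 2*pi * cos b"
    by (subst set_integral_const) auto
  then show ?thesis using True by simp
next
  case False
  have "period_integral (\<lambda>t. cos (of_int a * t + b))
      = sin (of_int a * (2*pi) + b) / of_int a - sin (of_int a * 0 + b) / of_int a"
    unfolding set_lebesgue_integral_def
    by (rule integral_FTC_atLeastAtMost)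
      (use False in \<open>auto intro!: derivative_eq_intros continuous_intros
        simp: has_real_derivative_iff_has_vector_derivative[symmetric]\<close>)
  moreover have "sin (of_int a * (2*pi) + b) = sin b"
    using sin_int_2pin[of a] cos_int_2pin[of a] by (simp add: sin_add mult.commute)
  ultimately show ?thesis using False by simp
qed

lemma period_integral_cos_nat:
  "period_integral (\<lambda>t. cos (real k * t + b)) = (if k = 0 then 2*pi * cos b else 0)"
  using period_integral_cos[of "int k" b] by simp

lemma set_integrable_cos_sums:
  assumes "f \<in> cos_sums N"
  shows "set_integrable lborel {0..2*pi} f"
  by (rule set_integrable_period_continuous[OF continuous_on_cos_sums[OF assms]])

text \<open>Telescoping after multiplication by \<open>2 sin (h/2)\<close>, where \<open>h = 2\<pi>j/N\<close>.\<close>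
lemma sum_cos_equispaced:
  fixes N j :: nat
  assumes "0 < N" "j < N"
  shows "(\<Sum>k<N. cos (real j * (2*pi * real k / real N) + b)) = (if j = 0 then real N * cos b else 0)"
proof (cases "j = 0")
  case True
  then show ?thesis by simp
next
  case False
  define h where "h = 2*pi * real j / real N"
  define F where "F k = sin (real k * h + b - h/2)" for k :: nat
  have "0 < h/2" "h/2 < pi" using assms False by (auto simp: h_def field_simps)
  then have sin_half: "sin (h/2) \<noteq> 0" using sin_gt_zero by fastforce
  have step: "2 * sin (h/2) * cos (real j * (2*pi * real k / real N) + b) = F (Suc k) - F k" for k
  proof -
    have "real j * (2*pi * real k / real N) + b = real k * h + b" by (simp add: h_def field_simps)
    moreover have "F (Suc k) = sin ((real k * h + b) + h/2)" "F k = sin ((real k * h + b) - h/2)"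
      by (simp_all add: F_def algebra_simps)
    ultimately show ?thesis by (simp add: sin_add sin_diff)
  qed
  have "2 * sin (h/2) * (\<Sum>k<N. cos (real j * (2*pi * real k / real N) + b)) = (\<Sum>k<N. F (Suc k) - F k)"
    unfolding sum_distrib_left using step by presburger
  also have "\<dots> = F N - F 0" by (rule sum_lessThan_telescope)
  also have "F N = F 0"
  proof -
    have shift: "real N * h + b - h/2 = (b - h/2) + of_int (int j) * (2*pi)"
      using assms by (simp add: h_def field_simps)
    have "sin ((b - h/2) + of_int (int j) * (2*pi)) = sin (b - h/2)"
      using sin_int_2pin[of "int j"] cos_int_2pin[of "int j"] by (simp add: sin_add mult.commute)
    then show ?thesis by (simp only: F_def shift) simp
  qed
  finally show ?thesis using sin_half False by simp
qed

lemma equispaced_quadrature_exact: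
  assumes "f \<in> cos_sums N" "N \<le> M" "0 < M"
  shows "(2*pi / real M) * (\<Sum>k<M. f (2*pi * real k / real M)) = period_integral f"
  using assms
proof (induction f rule: cos_sums.induct)
  case zero
  then show ?case by simp
next
  case (add_cos f j c b)
  have "period_integral (\<lambda>t. f t + c * cos (real j * t + b))
      = period_integral f + c * (if j = 0 then 2*pi * cos b else 0)"
    using set_integrable_cos_sums[OF add_cos.hyps(1)] set_integrable_cos_sums[OF cos_sums_cos[OF add_cos.hyps(2)]]
    by (simp add: set_integral_add period_integral_cos_nat)
  moreover have "(\<Sum>k<M. c * cos (real j * (2*pi * real k / real M) + b))
      = c * (if j = 0 then real M * cos b else 0)"
    using sum_cos_equispaced[of M j b] add_cos by (simp add: sum_distrib_left[symmetric])
  ultimately show ?case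
    using add_cos by (simp add: sum.distrib distrib_left)
qed

section \<open>Fejer and de la Vallee-Poussin kernels\<close>

definition fejer :: "nat \<Rightarrow> real \<Rightarrow> real" where
  "fejer m x = 1/2 + (\<Sum>k=1..m. (1 - real k / real m) * cos (real k * x))"

lemma sum_cos_sq_add_sum_sin_sq:
  "(\<Sum>j<m. cos (real j * x))\<^sup>2 + (\<Sum>j<m. sin (real j * x))\<^sup>2
     = real m + 2 * (\<Sum>k=1..m. (real m - real k) * cos (real k * x))"
proof (induction m)
  case 0
  then show ?case by simp
next
  case (Suc m)
  define A where "A = (\<Sum>j<m. cos (real j * x))"
  define B where "B = (\<Sum>j<m. sin (real j * x))"
  have cross: "A * cos (real m * x) + B * sin (real m * x) = (\<Sum>k=1..m. cos (real k * x))"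
  proof -
    have "A * cos (real m * x) + B * sin (real m * x) = (\<Sum>j<m. cos ((real m - real j) * x))"
      unfolding A_def B_def sum_distrib_right sum.distrib[symmetric]
      by (rule sum.cong) (auto simp: cos_diff left_diff_distrib)
    also have "\<dots> = (\<Sum>k=1..m. cos (real k * x))"
      by (rule sum.reindex_bij_witness[of _ "\<lambda>k. m - k" "\<lambda>j. m - j"]) (auto simp: of_nat_diff)
    finally show ?thesis .
  qed
  have "(\<Sum>j<Suc m. cos (real j * x))\<^sup>2 + (\<Sum>j<Suc m. sin (real j * x))\<^sup>2
      = (A\<^sup>2 + B\<^sup>2) + 2 * (A * cos (real m * x) + B * sin (real m * x))
        + ((cos (real m * x))\<^sup>2 + (sin (real m * x))\<^sup>2)"
    by (simp add: A_def B_def power2_eq_square algebra_simps)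
  also have "\<dots> = real m + 2 * (\<Sum>k=1..m. (real m - real k) * cos (real k * x))
      + 2 * (\<Sum>k=1..m. cos (real k * x)) + 1"
    using Suc cross by (simp add: A_def B_def)
  moreover have "(\<Sum>k=1..Suc m. (real (Suc m) - real k) * cos (real k * x))
      = (\<Sum>k=1..m. (real m - real k) * cos (real k * x)) + (\<Sum>k=1..m. cos (real k * x))"
    by (simp add: sum.distrib[symmetric] algebra_simps)
  ultimately show ?case by (simp add: algebra_simps)
qed

lemma fejer_nonneg:
  assumes "0 < m"
  shows "0 \<le> fejer m x"
proof -
  have "2 * real m * fejer m x = real m + 2 * (\<Sum>k=1..m. (real m - real k) * cos (real k * x))"
    using assms unfolding fejer_def by (simp add: algebra_simps sum_distrib_left diff_divide_distrib)
  also have "\<dots> \<ge> 0" using sum_cos_sq_add_sum_sin_sq[where m=m and x=x, symmetric] by simp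
  finally show ?thesis using assms by (simp add: zero_le_mult_iff)
qed

lemma fejer_minus: "fejer m (- x) = fejer m x"
  unfolding fejer_def by simp

lemma continuous_on_fejer [continuous_intros]:
  fixes h :: "real \<Rightarrow> real"
  assumes "continuous_on A h"
  shows "continuous_on A (\<lambda>x. fejer m (h x))"
proof -
  have harmonic: "continuous_on A (\<lambda>x. cos (real k * h x))" for k
    by (rule continuous_on_cos, rule continuous_on_mult[OF continuous_on_const assms])
  show ?thesis unfolding fejer_def by (intro continuous_intros harmonic)
qed

lemma fejer_shift_in_cos_sums: "(\<lambda>t. fejer m (t + c)) \<in> cos_sums (m + 1)"
proof -
  have "(\<lambda>t. 1/2 + (\<Sum>k\<in>{1..m}. (1 - real k / real m) * cos (real k * t + real k * c))) \<in> cos_sums (m + 1)"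
    by (intro cos_sums_add cos_sums_const cos_sums_sum cos_sums_cos) auto
  then show ?thesis unfolding fejer_def by (simp add: distrib_left)
qed

lemma period_integral_fejer_shift: "period_integral (\<lambda>t. fejer m (t + c)) = pi"
proof -
  let ?harmonic = "\<lambda>k t. (1 - real k / real m) * cos (real k * t + real k * c)"
  have "period_integral (\<lambda>t. fejer m (t + c))
      = period_integral (\<lambda>t. 1/2) + period_integral (\<lambda>t. \<Sum>k\<in>{1..m}. ?harmonic k t)"
    unfolding fejer_def distrib_left
    by (intro set_integral_add set_integrable_period_continuous continuous_intros)
  also have "period_integral (\<lambda>t. \<Sum>k\<in>{1..m}. ?harmonic k t) = 0"
    by (subst set_integral_sum)
      (auto intro!: set_integrable_period_continuous continuous_intros simp: period_integral_cos_nat)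
  also have "period_integral (\<lambda>t. 1/2) = pi"
    by (subst set_integral_const) auto
  finally show ?thesis by simp
qed

lemma VP_kernel_eq_fejer:
  assumes "1 \<le> n"
  shows "VP_kernel n x = 2 * fejer (4*n) x - fejer (2*n) x"
proof -
  let ?c = "\<lambda>k. cos (real k * x)"
  have split: "(\<Sum>k=1..4*n. (1 - real k / real (4*n)) * ?c k)
      = (\<Sum>k=1..2*n. (1 - real k / real (4*n)) * ?c k) + (\<Sum>k=2*n+1..4*n-1. (1 - real k / real (4*n)) * ?c k)"
  proof -
    have double: "4*n = 2*n + 2*n" by simp
    have "(\<Sum>k=1..4*n. (1 - real k / real (4*n)) * ?c k)
        = (\<Sum>k=1..2*n. (1 - real k / real (4*n)) * ?c k) + (\<Sum>k=2*n+1..4*n. (1 - real k / real (4*n)) * ?c k)"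
      by (subst (1 2) double, rule sum.ub_add_nat) simp
    moreover have "{2*n+1..4*n} = insert (4*n) {2*n+1..4*n-1}" using assms by auto
    ultimately show ?thesis using assms by simp
  qed
  have "2 * fejer (4*n) x - fejer (2*n) x
      = 1/2 + (\<Sum>k=1..2*n. (2 * (1 - real k / real (4*n)) - (1 - real k / real (2*n))) * ?c k)
        + (\<Sum>k=2*n+1..4*n-1. 2 * (1 - real k / real (4*n)) * ?c k)"
    unfolding fejer_def split
    by (simp add: sum_distrib_left sum_subtractf[symmetric] sum.distrib[symmetric] algebra_simps)
  also have "(\<Sum>k=1..2*n. (2 * (1 - real k / real (4*n)) - (1 - real k / real (2*n))) * ?c k) = (\<Sum>k=1..2*n. ?c k)"
    using assms by (intro sum.cong) (auto simp: field_simps)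
  also have "(\<Sum>k=2*n+1..4*n-1. 2 * (1 - real k / real (4*n)) * ?c k)
      = (\<Sum>k=2*n+1..4*n-1. (real (4*n) - real k) / real (2*n) * ?c k)"
    using assms by (intro sum.cong) (auto simp: field_simps)
  finally show ?thesis unfolding VP_kernel_def by simp
qed

lemma VP_kernel_minus: "VP_kernel n (- x) = VP_kernel n x"
  unfolding VP_kernel_def by simp

lemma VP_kernel_shift_in_cos_sums:
  assumes "1 \<le> n"
  shows "(\<lambda>t. VP_kernel n (c - t)) \<in> cos_sums (4*n)"
proof -
  have "(\<lambda>t. (1/2 + (\<Sum>k\<in>{1..2*n}. 1 * cos (real k * t + real k * (-c))))
      + (\<Sum>k\<in>{2*n+1..4*n-1}. (real (4*n) - real k) / real (2*n) * cos (real k * t + real k * (-c))))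
      \<in> cos_sums (4*n)"
    using assms by (intro cos_sums_add cos_sums_const cos_sums_sum cos_sums_cos) auto
  then have "(\<lambda>t. VP_kernel n (t + (-c))) \<in> cos_sums (4*n)"
    unfolding VP_kernel_def by (simp add: algebra_simps)
  moreover have "VP_kernel n (c - t) = VP_kernel n (t + (-c))" for t
    using VP_kernel_minus[of n "c - t"] by simp
  ultimately show ?thesis by simp
qed

text \<open>Unlike \<open>\<bar>K\<^sub>n\<bar>\<close> itself, this majorant is a trigonometric polynomial, so exact quadrature
  computes its sums over the nodes.\<close>
definition VP_majorant :: "nat \<Rightarrow> real \<Rightarrow> real" where
  "VP_majorant n x = 2 * fejer (4*n) x + fejer (2*n) x"

lemma abs_VP_kernel_le_majorant: "1 \<le> n \<Longrightarrow> \<bar>VP_kernel n x\<bar> \<le> VP_majorant n x"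
  unfolding VP_majorant_def VP_kernel_eq_fejer
  using fejer_nonneg[of "4*n" x] fejer_nonneg[of "2*n" x] by auto

lemma VP_majorant_nonneg: "1 \<le> n \<Longrightarrow> 0 \<le> VP_majorant n x"
  unfolding VP_majorant_def using fejer_nonneg[of "4*n" x] fejer_nonneg[of "2*n" x] by simp

lemma VP_majorant_minus: "VP_majorant n (- x) = VP_majorant n x"
  unfolding VP_majorant_def by (simp add: fejer_minus)

lemma continuous_on_VP_majorant [continuous_intros]:
  "continuous_on A (h :: real \<Rightarrow> real) \<Longrightarrow> continuous_on A (\<lambda>x. VP_majorant n (h x))"
  unfolding VP_majorant_def by (intro continuous_intros)

lemma VP_majorant_shift_in_cos_sums: "(\<lambda>t. VP_majorant n (t + c)) \<in> cos_sums (4*n + 1)"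
  unfolding VP_majorant_def
  by (intro cos_sums_add cos_sums_cmult fejer_shift_in_cos_sums cos_sums_mono[OF fejer_shift_in_cos_sums]) auto

lemma period_integral_VP_majorant:
  shows "period_integral (\<lambda>t. VP_majorant n (t - c)) = 3 * pi"
    and "period_integral (\<lambda>t. VP_majorant n (c - t)) = 3 * pi"
proof -
  show shifted: "period_integral (\<lambda>t. VP_majorant n (t - c)) = 3 * pi"
    unfolding VP_majorant_def
    using period_integral_fejer_shift[of "4*n" "-c"] period_integral_fejer_shift[of "2*n" "-c"]
    by (subst set_integral_add) (auto intro!: set_integrable_period_continuous continuous_intros)
  have "VP_majorant n (c - t) = VP_majorant n (t - c)" for t
    using VP_majorant_minus[of n "t - c"] by simp
  then show "period_integral (\<lambda>t. VP_majorant n (c - t)) = 3 * pi"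
    using shifted by simp
qed

definition VP_node :: "nat \<Rightarrow> nat \<Rightarrow> real" where
  "VP_node n k = 2*pi * real k / real (6*n)"

lemma sum_VP_majorant_nodes:
  assumes "1 \<le> n"
  shows "(\<Sum>k<6*n. VP_majorant n (VP_node n k - c)) = 9 * real n"
    and "(\<Sum>k<6*n. VP_majorant n (c - VP_node n k)) = 9 * real n"
proof -
  have "(2*pi / real (6*n)) * (\<Sum>k<6*n. VP_majorant n (VP_node n k + (-c)))
      = period_integral (\<lambda>t. VP_majorant n (t + (-c)))"
    unfolding VP_node_def
    by (rule equispaced_quadrature_exact[OF VP_majorant_shift_in_cos_sums]) (use assms in auto)
  then show shifted: "(\<Sum>k<6*n. VP_majorant n (VP_node n k - c)) = 9 * real n"
    using period_integral_VP_majorant(1)[of n c] assms by (simp add: field_simps)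
  have "VP_majorant n (c - VP_node n k) = VP_majorant n (VP_node n k - c)" for k
    using VP_majorant_minus[of n "VP_node n k - c"] by simp
  then show "(\<Sum>k<6*n. VP_majorant n (c - VP_node n k)) = 9 * real n"
    using shifted by simp
qed

lemma period_integral_cos_mult_cos_diff:
  assumes "1 \<le> k"
  shows "period_integral (\<lambda>t. cos (real m * t + b) * cos (real k * (\<phi> - t)))
    = (if m = k then pi * cos (real m * \<phi> + b) else 0)"
proof -
  have product: "cos (real m * t + b) * cos (real k * (\<phi> - t))
      = (1/2) * cos (of_int (int m - int k) * t + (b + real k * \<phi>))
        + (1/2) * cos (of_int (int (m + k)) * t + (b - real k * \<phi>))" for t
  proof -
    have "cos (real m * t + b) * cos (real k * (\<phi> - t))
      = (cos ((real m * t + b) + real k * (\<phi> - t)) + cos ((real m * t + b) - real k * (\<phi> - t))) / 2"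
      by (simp add: cos_add cos_diff)
    moreover have "(real m * t + b) + real k * (\<phi> - t) = of_int (int m - int k) * t + (b + real k * \<phi>)"
      and "(real m * t + b) - real k * (\<phi> - t) = of_int (int (m + k)) * t + (b - real k * \<phi>)"
      by (simp_all add: algebra_simps)
    ultimately show ?thesis by simp
  qed
  have "period_integral (\<lambda>t. cos (real m * t + b) * cos (real k * (\<phi> - t)))
      = (1/2) * period_integral (\<lambda>t. cos (of_int (int m - int k) * t + (b + real k * \<phi>)))
        + (1/2) * period_integral (\<lambda>t. cos (of_int (int (m + k)) * t + (b - real k * \<phi>)))"
    unfolding product
    by (subst set_integral_add) (auto intro!: set_integrable_period_continuous continuous_intros)
  also have "\<dots> = (if m = k then pi * cos (real m * \<phi> + b) else 0)"
    using assms by (simp only: period_integral_cos) (auto simp: algebra_simps)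
  finally show ?thesis .
qed

lemma period_integral_cos_mult_VP_kernel:
  assumes "1 \<le> n" "m \<le> 2*n"
  shows "period_integral (\<lambda>t. cos (real m * t + b) * VP_kernel n (\<phi> - t)) = pi * cos (real m * \<phi> + b)"
proof -
  let ?w = "\<lambda>k. (real (4*n) - real k) / real (2*n)"
  let ?g = "\<lambda>k t. cos (real m * t + b) * cos (real k * (\<phi> - t))"
  have expand: "cos (real m * t + b) * VP_kernel n (\<phi> - t)
      = (1/2) * cos (real m * t + b) + ((\<Sum>k\<in>{1..2*n}. ?g k t) + (\<Sum>k\<in>{2*n+1..4*n-1}. ?w k * ?g k t))" for t
    unfolding VP_kernel_def by (simp add: algebra_simps sum_distrib_left)
  have "set_integrable lborel {0..2*pi} (\<lambda>t. (1/2) * cos (real m * t + b))"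
    and "set_integrable lborel {0..2*pi} (\<lambda>t. \<Sum>k\<in>{1..2*n}. ?g k t)"
    and "set_integrable lborel {0..2*pi} (\<lambda>t. \<Sum>k\<in>{2*n+1..4*n-1}. ?w k * ?g k t)"
    by (intro set_integrable_period_continuous continuous_intros)+
  then have "period_integral (\<lambda>t. cos (real m * t + b) * VP_kernel n (\<phi> - t))
      = period_integral (\<lambda>t. (1/2) * cos (real m * t + b))
        + (period_integral (\<lambda>t. \<Sum>k\<in>{1..2*n}. ?g k t)
           + period_integral (\<lambda>t. \<Sum>k\<in>{2*n+1..4*n-1}. ?w k * ?g k t))"
    unfolding expand by (simp add: set_integral_add)
  also have "period_integral (\<lambda>t. (1/2) * cos (real m * t + b)) = (if m = 0 then pi * cos b else 0)"
    by (simp add: period_integral_cos_nat)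
  also have "period_integral (\<lambda>t. \<Sum>k\<in>{1..2*n}. ?g k t) = (if 1 \<le> m then pi * cos (real m * \<phi> + b) else 0)"
    using assms
    by (subst set_integral_sum)
      (auto intro!: set_integrable_period_continuous continuous_intros
        simp: period_integral_cos_mult_cos_diff sum.delta)
  also have "period_integral (\<lambda>t. \<Sum>k\<in>{2*n+1..4*n-1}. ?w k * ?g k t) = 0"
    using assms
    by (subst set_integral_sum)
      (auto intro!: set_integrable_period_continuous continuous_intros sum.neutral
        simp: period_integral_cos_mult_cos_diff)
  finally show ?thesis by (cases "m = 0") auto
qed

lemma period_integral_mult_VP_kernel:
  assumes "q \<in> cos_sums (2*n + 1)" "1 \<le> n"
  shows "period_integral (\<lambda>t. q t * VP_kernel n (\<phi> - t)) = pi * q \<phi>"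
  using assms
proof (induction q rule: cos_sums.induct)
  case zero
  then show ?case by simp
next
  case (add_cos f j c b)
  have "set_integrable lborel {0..2*pi} (\<lambda>t. f t * VP_kernel n (\<phi> - t))"
    by (rule set_integrable_cos_sums[OF cos_sums_mult[OF add_cos.hyps(1) VP_kernel_shift_in_cos_sums[OF assms(2)]]])
  moreover have "set_integrable lborel {0..2*pi} (\<lambda>t. c * (cos (real j * t + b) * VP_kernel n (\<phi> - t)))"
    unfolding VP_kernel_def by (intro set_integrable_period_continuous continuous_intros)
  ultimately have "period_integral (\<lambda>t. (f t + c * cos (real j * t + b)) * VP_kernel n (\<phi> - t))
      = period_integral (\<lambda>t. f t * VP_kernel n (\<phi> - t))
        + c * period_integral (\<lambda>t. cos (real j * t + b) * VP_kernel n (\<phi> - t))"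
    by (simp add: distrib_right mult.assoc set_integral_add)
  then show ?case
    using add_cos period_integral_cos_mult_VP_kernel[of n j b \<phi>] by (simp add: distrib_left)
qed

definition nodal_means :: "nat \<Rightarrow> (real \<Rightarrow> real) \<Rightarrow> (real \<Rightarrow> real) \<Rightarrow> real \<Rightarrow> real" where
  "nodal_means n \<Phi> f \<phi> = 1 / (3 * real n) * (\<Sum>k<6*n. f (VP_node n k) * \<Phi> (\<phi> - VP_node n k))"

lemma VP_means_eq_nodal_means: "1 \<le> n \<Longrightarrow> VP_means n f = nodal_means n (VP_kernel n) f"
proof -
  assume "1 \<le> n"
  then have "{0..6*n-1} = {..<6*n}" by auto
  moreover have "pi * real k / (3 * real n) = VP_node n k" for k by (simp add: VP_node_def)
  ultimately show ?thesis unfolding VP_means_def nodal_means_def by simp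
qed

lemma continuous_on_nodal_means:
  "(\<And>c. continuous_on A (\<lambda>x. \<Phi> (x - c))) \<Longrightarrow> continuous_on A (nodal_means n \<Phi> f)"
  unfolding nodal_means_def by (intro continuous_intros) auto

lemma VP_means_reproduces:
  assumes "q \<in> cos_sums (2*n)" "1 \<le> n"
  shows "VP_means n q \<phi> = q \<phi>"
proof -
  have product: "(\<lambda>t. q t * VP_kernel n (\<phi> - t)) \<in> cos_sums (2*n + 4*n)"
    by (rule cos_sums_mult[OF assms(1) VP_kernel_shift_in_cos_sums[OF assms(2)]])
  have "VP_means n q \<phi> = (1/pi) * ((2*pi / real (6*n)) * (\<Sum>k<6*n. q (VP_node n k) * VP_kernel n (\<phi> - VP_node n k)))"
    using assms(2) by (simp add: VP_means_eq_nodal_means nodal_means_def)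
  also have "\<dots> = (1/pi) * period_integral (\<lambda>t. q t * VP_kernel n (\<phi> - t))"
    using equispaced_quadrature_exact[OF product, of "6*n"] assms by (simp add: VP_node_def)
  also have "\<dots> = q \<phi>"
    using period_integral_mult_VP_kernel[OF cos_sums_mono[OF assms(1)] assms(2)] by simp
  finally show ?thesis .
qed

lemma abs_diff_VP_means_le:
  assumes n: "1 \<le> n" and q: "q \<in> cos_sums (2*n)"
    and below: "\<And>x. q x \<le> f x" and above: "\<And>x. f x \<le> Q x"
  shows "\<bar>f \<phi> - VP_means n f \<phi>\<bar> \<le> (Q \<phi> - q \<phi>) + nodal_means n (VP_majorant n) (\<lambda>x. Q x - q x) \<phi>"
proof -
  define g where "g x = f x - q x" for x
  have g: "0 \<le> g x" "g x \<le> Q x - q x" for x using below[of x] above[of x] by (auto simp: g_def)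
  have gap: "q x \<le> Q x" for x using below[of x] above[of x] by simp
  have "VP_means n g \<phi> = VP_means n f \<phi> - VP_means n q \<phi>"
    unfolding VP_means_def g_def by (simp add: left_diff_distrib sum_subtractf right_diff_distrib)
  then have split: "f \<phi> - VP_means n f \<phi> = g \<phi> - VP_means n g \<phi>"
    using VP_means_reproduces[OF q n, of \<phi>] by (simp add: g_def)
  have "\<bar>VP_means n g \<phi>\<bar> \<le> 1 / (3 * real n) * (\<Sum>k<6*n. \<bar>g (VP_node n k) * VP_kernel n (\<phi> - VP_node n k)\<bar>)"
    unfolding VP_means_eq_nodal_means[OF n] nodal_means_def
    using sum_abs[of "\<lambda>k. g (VP_node n k) * VP_kernel n (\<phi> - VP_node n k)" "{..<6*n}"]
    by (simp add: abs_mult divide_right_mono)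
  also have "\<dots> \<le> nodal_means n (VP_majorant n) (\<lambda>x. Q x - q x) \<phi>"
    unfolding nodal_means_def using g gap abs_VP_kernel_le_majorant[OF n]
    by (intro mult_left_mono sum_mono) (auto simp: abs_mult intro!: mult_mono)
  finally show ?thesis using split g[of \<phi>] by linarith
qed

lemma sum_VP_majorant_nodes_weights:
  "1 \<le> n \<Longrightarrow> (\<Sum>k<6*n. VP_majorant n (\<phi> - VP_node n k) / (3 * real n)) = 3"
  using sum_VP_majorant_nodes(2)[of n \<phi>] by (simp add: sum_divide_distrib[symmetric])

lemma nodal_majorant_means_powr_le:
  assumes p: "1 \<le> p" and n: "1 \<le> n" and T: "\<And>x. 0 \<le> T x"
  shows "nodal_means n (VP_majorant n) T \<phi> powr p
    \<le> 3 powr (p - 1) * nodal_means n (VP_majorant n) (\<lambda>x. T x powr p) \<phi>"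
proof -
  have "(\<Sum>k<6*n. VP_majorant n (\<phi> - VP_node n k) / (3 * real n) * T (VP_node n k)) powr p
      \<le> 3 powr (p - 1) * (\<Sum>k<6*n. VP_majorant n (\<phi> - VP_node n k) / (3 * real n) * T (VP_node n k) powr p)"
    by (rule powr_weighted_sum_le[OF _ _ sum_VP_majorant_nodes_weights[OF n]])
      (use VP_majorant_nonneg[OF n] T p in auto)
  then show ?thesis
    unfolding nodal_means_def by (simp add: sum_divide_distrib algebra_simps)
qed

lemma period_integral_nodal_majorant_means:
  "period_integral (nodal_means n (VP_majorant n) h) = pi / real n * (\<Sum>k<6*n. h (VP_node n k))"
proof -
  have "period_integral (nodal_means n (VP_majorant n) h)
      = 1 / (3 * real n) * (\<Sum>k<6*n. h (VP_node n k) * period_integral (\<lambda>\<phi>. VP_majorant n (\<phi> - VP_node n k)))"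
    unfolding nodal_means_def
    by (subst set_integral_mult_right, subst set_integral_sum)
      (auto intro!: set_integrable_period_continuous continuous_intros)
  then show ?thesis
    by (simp add: period_integral_VP_majorant sum_distrib_left sum_distrib_right) (simp add: algebra_simps)
qed

text \<open>Since \<open>K\<^sub>n\<close> reproduces \<open>T\<close>, the sample \<open>T c\<close> is an average of \<open>T\<close> against \<open>K\<^sub>n (c - \<cdot>)\<close>, which
  \<open>VP_majorant n\<close> dominates.\<close>
lemma cos_sums_powr_le_majorant_integral:
  assumes p: "1 \<le> p" and n: "1 \<le> n" and T: "T \<in> cos_sums (2*n + 1)" "\<And>x. 0 \<le> T x"
  shows "T c powr p \<le> 3 powr (p - 1) * period_integral (\<lambda>y. VP_majorant n (c - y) / pi * T y powr p)"
proof -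
  have Tc: "continuous_on A T" for A by (rule continuous_on_cos_sums[OF T(1)])
  have "pi * T c = period_integral (\<lambda>y. T y * VP_kernel n (c - y))"
    by (rule period_integral_mult_VP_kernel[OF T(1) n, symmetric])
  also have "\<dots> \<le> period_integral (\<lambda>y. VP_majorant n (c - y) * T y)"
  proof (rule set_integral_mono)
    show "set_integrable lborel {0..2*pi} (\<lambda>y. T y * VP_kernel n (c - y))"
      by (rule set_integrable_cos_sums[OF cos_sums_mult[OF T(1) VP_kernel_shift_in_cos_sums[OF n]]])
    show "set_integrable lborel {0..2*pi} (\<lambda>y. VP_majorant n (c - y) * T y)"
      by (intro set_integrable_period_continuous continuous_intros Tc)
    fix y
    show "T y * VP_kernel n (c - y) \<le> VP_majorant n (c - y) * T y"
      using mult_left_mono[OF _ T(2)[of y], of "VP_kernel n (c - y)" "VP_majorant n (c - y)"]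
        abs_VP_kernel_le_majorant[OF n, of "c - y"]
      by (simp add: mult.commute)
  qed
  finally have "T c \<le> period_integral (\<lambda>y. VP_majorant n (c - y) / pi * T y)"
    by (simp add: field_simps)
  then have "T c powr p \<le> period_integral (\<lambda>y. VP_majorant n (c - y) / pi * T y) powr p"
    using p T(2) by (intro powr_mono2) auto
  also have "\<dots> \<le> 3 powr (p - 1) * period_integral (\<lambda>y. VP_majorant n (c - y) / pi * T y powr p)"
    using p T(2) VP_majorant_nonneg[OF n] period_integral_VP_majorant(2)[of n c]
    by (intro powr_weighted_set_integral_le)
      (auto intro!: set_integrable_period_continuous continuous_intros Tc continuous_on_powr')
  finally show ?thesis .
qed

lemma sum_VP_nodes_powr_le:
  assumes p: "1 \<le> p" and n: "1 \<le> n" and T: "T \<in> cos_sums (2*n + 1)" "\<And>x. 0 \<le> T x"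
  shows "(\<Sum>k<6*n. T (VP_node n k) powr p) \<le> 3 powr (p - 1) * (9 * real n / pi) * period_integral (\<lambda>y. T y powr p)"
proof -
  have Tp: "continuous_on A (\<lambda>y. T y powr p)" for A
    by (rule continuous_on_powr') (use continuous_on_cos_sums[OF T(1)] T(2) p in auto)
  have "(\<Sum>k<6*n. T (VP_node n k) powr p)
      \<le> 3 powr (p - 1) * (\<Sum>k<6*n. period_integral (\<lambda>y. VP_majorant n (VP_node n k - y) / pi * T y powr p))"
    unfolding sum_distrib_left by (intro sum_mono cos_sums_powr_le_majorant_integral assms)
  also have "(\<Sum>k<6*n. period_integral (\<lambda>y. VP_majorant n (VP_node n k - y) / pi * T y powr p))
      = period_integral (\<lambda>y. (\<Sum>k<6*n. VP_majorant n (VP_node n k - y)) / pi * T y powr p)"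
    unfolding sum_divide_distrib sum_distrib_right
    by (subst set_integral_sum) (auto intro!: set_integrable_period_continuous continuous_intros Tp)
  also have "\<dots> = 9 * real n / pi * period_integral (\<lambda>y. T y powr p)"
    using sum_VP_majorant_nodes(1)[OF n] by simp
  finally show ?thesis by (simp add: mult.assoc)
qed

lemma nine_powr_eq: "3 powr (p - 1) * 3 powr (p - 1) * 9 = (9::real) powr p"
proof -
  have "(3::real) powr ((p - 1) + (p - 1) + 2) = 3 powr (p - 1) * 3 powr (p - 1) * 3 powr 2"
    by (simp only: powr_add)
  moreover have "(9::real) powr p = (3 powr 2) powr p" by (simp add: powr_numeral)
  moreover have "((3::real) powr 2) powr p = 3 powr ((p - 1) + (p - 1) + 2)"
    by (subst powr_powr) (simp add: algebra_simps)
  ultimately show ?thesis by (simp add: powr_numeral)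
qed

lemma period_integral_diff_VP_means_powr_le:
  assumes p: "1 \<le> p" and n: "1 \<le> n" and f: "f \<in> borel_measurable borel"
    and q: "q \<in> cos_sums (2*n)" and Q: "Q \<in> cos_sums (2*n)"
    and below: "\<And>x. q x \<le> f x" and above: "\<And>x. f x \<le> Q x"
  shows "period_integral (\<lambda>x. \<bar>f x - VP_means n f x\<bar> powr p)
    \<le> 2 powr (p - 1) * (1 + 9 powr p) * period_integral (\<lambda>x. \<bar>Q x - q x\<bar> powr p)"
proof -
  define T where "T x = Q x - q x" for x
  define S where "S = nodal_means n (VP_majorant n) T"
  have T_poly: "T \<in> cos_sums (2*n + 1)"
    unfolding T_def[abs_def] by (intro cos_sums_mono[OF cos_sums_diff[OF Q q]]) simp
  have T0: "0 \<le> T x" for x using below[of x] above[of x] by (simp add: T_def)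
  have S0: "0 \<le> S x" for x
    unfolding S_def nodal_means_def using T0 VP_majorant_nonneg[OF n] by (intro mult_nonneg_nonneg sum_nonneg) auto
  have Tc: "continuous_on A T" for A by (rule continuous_on_cos_sums[OF T_poly])
  have Sc: "continuous_on A S" for A
    unfolding S_def by (intro continuous_on_nodal_means continuous_intros)
  have Tpc: "continuous_on A (\<lambda>x. T x powr p)" and Spc: "continuous_on A (\<lambda>x. S x powr p)" for A
    using p T0 S0 by (auto intro!: continuous_on_powr' Tc Sc)
  have iTp: "set_integrable lborel {0..2*pi} (\<lambda>x. T x powr p)"
    and iSp: "set_integrable lborel {0..2*pi} (\<lambda>x. S x powr p)"
    by (intro set_integrable_period_continuous Tpc Spc)+
  have pointwise: "\<bar>f x - VP_means n f x\<bar> powr p \<le> 2 powr (p - 1) * (T x powr p + S x powr p)" for x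
  proof -
    have "\<bar>f x - VP_means n f x\<bar> \<le> T x + S x"
      unfolding T_def S_def by (rule abs_diff_VP_means_le[OF n q below above])
    then have "\<bar>f x - VP_means n f x\<bar> powr p \<le> (T x + S x) powr p"
      using p by (intro powr_mono2) auto
    then show ?thesis using powr_add_le[OF T0[of x] S0[of x] p] by linarith
  qed
  have "period_integral (\<lambda>\<phi>. S \<phi> powr p) \<le> period_integral (\<lambda>\<phi>. 3 powr (p - 1) * nodal_means n (VP_majorant n) (\<lambda>x. T x powr p) \<phi>)"
    unfolding S_def
    by (intro set_integral_mono nodal_majorant_means_powr_le p n T0 iSp[unfolded S_def]
        set_integrable_period_continuous continuous_intros continuous_on_nodal_means)
  also have "\<dots> = 3 powr (p - 1) * (pi / real n) * (\<Sum>k<6*n. T (VP_node n k) powr p)"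
    by (simp add: period_integral_nodal_majorant_means)
  also have "\<dots> \<le> 3 powr (p - 1) * (pi / real n) * (3 powr (p - 1) * (9 * real n / pi) * period_integral (\<lambda>y. T y powr p))"
    by (intro mult_left_mono sum_VP_nodes_powr_le p n T_poly T0) auto
  also have "\<dots> = 9 powr p * period_integral (\<lambda>y. T y powr p)"
    using n nine_powr_eq[of p] by (simp add: field_simps)
  finally have S_bound: "period_integral (\<lambda>\<phi>. S \<phi> powr p) \<le> 9 powr p * period_integral (\<lambda>y. T y powr p)" .
  have measurable: "(\<lambda>x. \<bar>f x - VP_means n f x\<bar> powr p) \<in> borel_measurable borel"
  proof -
    have "continuous_on UNIV (VP_means n f)"
      unfolding VP_means_eq_nodal_means[OF n] VP_kernel_def
      by (intro continuous_on_nodal_means continuous_intros)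
    then show ?thesis using f by (measurable, auto intro: borel_measurable_continuous_onI)
  qed
  have "period_integral (\<lambda>x. \<bar>f x - VP_means n f x\<bar> powr p)
      \<le> period_integral (\<lambda>x. 2 powr (p - 1) * (T x powr p + S x powr p))"
  proof (rule set_integral_mono)
    show "set_integrable lborel {0..2*pi} (\<lambda>x. \<bar>f x - VP_means n f x\<bar> powr p)"
      using pointwise
      by (intro set_integrable_period_dominated[OF measurable,
          of "\<lambda>x. 2 powr (p - 1) * (T x powr p + S x powr p)"] continuous_intros Tpc Spc) auto
    show "set_integrable lborel {0..2*pi} (\<lambda>x. 2 powr (p - 1) * (T x powr p + S x powr p))"
      by (intro set_integrable_period_continuous continuous_intros Tpc Spc)
  qed (rule pointwise)
  also have "\<dots> = 2 powr (p - 1) * (period_integral (\<lambda>x. T x powr p) + period_integral (\<lambda>x. S x powr p))"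
    using iTp iSp by simp
  also have "\<dots> \<le> 2 powr (p - 1) * (1 + 9 powr p) * period_integral (\<lambda>x. T x powr p)"
    using S_bound by (simp add: algebra_simps)
  finally show ?thesis using T0 by (simp add: T_def)
qed

lemma Lp_norm_le_if_integral_powr_le:
  assumes "0 < p" "0 \<le> D"
    and "period_integral (\<lambda>x. \<bar>g x\<bar> powr p) \<le> D * period_integral (\<lambda>x. \<bar>h x\<bar> powr p)"
  shows "Lp_norm p g \<le> D powr (1/p) * Lp_norm p h"
proof -
  have "0 \<le> period_integral (\<lambda>x. \<bar>g x\<bar> powr p)" "0 \<le> period_integral (\<lambda>x. \<bar>h x\<bar> powr p)"
    by (simp_all add: period_integral_nonneg)
  then show ?thesis
    unfolding Lp_norm_def using assms by (simp add: powr_mono2 flip: powr_mult)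
qed

lemma le_mult_one_sided_E:
  assumes bounded: "bounded (range f)" and C: "0 < C"
    and approx: "\<And>q Q. q \<in> trig_polys n \<Longrightarrow> Q \<in> trig_polys n \<Longrightarrow> (\<And>x. q x \<le> f x) \<Longrightarrow> (\<And>x. f x \<le> Q x)
      \<Longrightarrow> a \<le> C * Lp_norm p (\<lambda>x. Q x - q x)"
  shows "a \<le> C * one_sided_E p f n"
proof -
  define X where "X = {Lp_norm p (\<lambda>x. Q x - q x) | q Q.
    q \<in> trig_polys n \<and> Q \<in> trig_polys n \<and> (\<forall>x. q x \<le> f x \<and> f x \<le> Q x)}"
  obtain B where "\<And>x. \<bar>f x\<bar> \<le> B" using bounded unfolding bounded_real by auto
  then have "\<forall>x. - B \<le> f x \<and> f x \<le> B" by (metis abs_le_iff minus_le_iff)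
  then have "Lp_norm p (\<lambda>x. B - (- B)) \<in> X"
    unfolding X_def using const_in_trig_polys[of "- B" n] const_in_trig_polys[of B n]
    by (intro CollectI exI[of _ "\<lambda>_. - B"] exI[of _ "\<lambda>_. B"]) simp
  then have "a / C \<le> Inf X"
    using C approx by (intro cInf_greatest) (auto simp: X_def field_simps mult.commute)
  then show ?thesis
    using C unfolding one_sided_E_def X_def[symmetric] by (simp add: field_simps)
qed

theorem lemma5p7:
  fixes p :: real
  assumes "1 \<le> p"
  shows "\<exists>C. \<forall>f \<in> B_T. \<forall>n::nat. n \<ge> 1 \<longrightarrow>
           Lp_norm p (\<lambda>x. f x - VP_means n f x) \<le> C * one_sided_E p f n"
proof (intro exI ballI allI impI)
  define D where "D = 2 powr (p - 1) * (1 + 9 powr p)"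
  have D: "0 < D" unfolding D_def by (simp add: add_pos_nonneg)
  fix f and n :: nat
  assume f: "f \<in> B_T" and n: "1 \<le> n"
  have trig_poly: "r \<in> cos_sums (2*n)" if "r \<in> trig_polys n" for r
    using cos_sums_mono[of r "n + 1" "2*n"] trig_polys_subset_cos_sums that n by auto
  show "Lp_norm p (\<lambda>x. f x - VP_means n f x) \<le> D powr (1/p) * one_sided_E p f n"
  proof (rule le_mult_one_sided_E)
    fix q Q assume "q \<in> trig_polys n" "Q \<in> trig_polys n" "\<And>x. q x \<le> f x" "\<And>x. f x \<le> Q x"
    moreover have "f \<in> borel_measurable borel" using f by (simp add: B_T_def)
    ultimately have "period_integral (\<lambda>x. \<bar>f x - VP_means n f x\<bar> powr p)
        \<le> D * period_integral (\<lambda>x. \<bar>Q x - q x\<bar> powr p)"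
      unfolding D_def by (intro period_integral_diff_VP_means_powr_le assms n trig_poly)
    then show "Lp_norm p (\<lambda>x. f x - VP_means n f x) \<le> D powr (1/p) * Lp_norm p (\<lambda>x. Q x - q x)"
      using assms D by (intro Lp_norm_le_if_integral_powr_le) auto
  qed (use f D in \<open>simp_all add: B_T_def\<close>)
qed

end
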